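(* Every simple partially ordered abelian group of rank one $(G,G^+)$ is order-isomorphic to the direct limit of a directed system $(G_n,f_{n,n+1})_{n\ge 1}$ in which, for every $n\in\mathbb{N}$, $G_n=(\mathbb{Z},G_n^+)$ is a simple component and $f_{n,n+1}\colon G_n\to G_{n+1}$ is an order-embedding.
   Context: A partially ordered abelian group $(G,G^+)$ is an abelian group $G$ with a submonoid $G^+$ (containing $0$) such that $G^+\cap(-G^+)=\{0\}$; write $x\le_G y$ iff $y-x\in G^+$. An order-unit is $0\neq u\in G^+$ such that for every $x\in G$ there is $n\in\mathbb{N}$ with $-nu\le_G x\le_G nu$. $(G,G^+)$ is simple if $G\neq 0$ and every nonzero element of $G^+$ is an order-unit. $G$ has rank one if it is isomorphic (as an abelian group) to a nonzero subgroup of $\mathbb{Q}$. A simple component is a simple partially ordered abelian group of the form $(\mathbb{Z},P)$. A positive morphism $f\colon G\to H$ is a group homomorphism with $f(G^+)\subseteq H^+$; it is an order-embedding if it is injective and $f(G^+)=f(G)\cap H^+$. The direct limit of a directed system of partially ordered abelian groups with positive connecting maps is the group-theoretic direct limit with positive cone the union of the images of the positive cones. *)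

theory Defs
  imports Complex_Main
begin

definition po_group :: "'a::ab_group_add set \<Rightarrow> bool" where
  "po_group P \<longleftrightarrow> 0 \<in> P \<and> (\<forall>x\<in>P. \<forall>y\<in>P. x + y \<in> P) \<and> P \<inter> uminus ` P = {0}"

definition po_le :: "'a::ab_group_add set \<Rightarrow> 'a \<Rightarrow> 'a \<Rightarrow> bool" where
  "po_le P x y \<longleftrightarrow> y - x \<in> P"

definition nsmul :: "nat \<Rightarrow> 'a::ab_group_add \<Rightarrow> 'a" where
  "nsmul n u = (((+) u) ^^ n) 0"

definition order_unit :: "'a::ab_group_add set \<Rightarrow> 'a \<Rightarrow> bool" where
  "order_unit P u \<longleftrightarrow> u \<noteq> 0 \<and> u \<in> P \<and>
     (\<forall>x. \<exists>n::nat. po_le P (- nsmul n u) x \<and> po_le P x (nsmul n u))"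

definition simple_po_group :: "'a::ab_group_add set \<Rightarrow> bool" where
  "simple_po_group P \<longleftrightarrow> po_group P \<and> (UNIV :: 'a set) \<noteq> {0} \<and>
     (\<forall>x\<in>P. x \<noteq> 0 \<longrightarrow> order_unit P x)"

definition rank_one :: "'a::ab_group_add itself \<Rightarrow> bool" where
  "rank_one _ \<longleftrightarrow> (UNIV :: 'a set) \<noteq> {0} \<and>
     (\<exists>h :: 'a \<Rightarrow> rat. inj h \<and> (\<forall>x y. h (x + y) = h x + h y))"

definition simple_component :: "int set \<Rightarrow> bool" where
  "simple_component P \<longleftrightarrow> simple_po_group P"

definition group_hom :: "('a::ab_group_add \<Rightarrow> 'b::ab_group_add) \<Rightarrow> bool" where
  "group_hom f \<longleftrightarrow> (\<forall>x y. f (x + y) = f x + f y)"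

definition order_embedding ::
  "'a::ab_group_add set \<Rightarrow> 'b::ab_group_add set \<Rightarrow> ('a \<Rightarrow> 'b) \<Rightarrow> bool" where
  "order_embedding P Q f \<longleftrightarrow> group_hom f \<and> f ` P \<subseteq> Q \<and> inj f \<and> f ` P = range f \<inter> Q"

(* connecting map f_{n,n+d} = f_{n+d-1} o ... o f_n *)
fun trans_map :: "(nat \<Rightarrow> int \<Rightarrow> int) \<Rightarrow> nat \<Rightarrow> nat \<Rightarrow> int \<Rightarrow> int" where
  "trans_map f n 0 = id"
| "trans_map f n (Suc d) = f (n + d) \<circ> trans_map f n d"

definition dl_rel :: "(nat \<Rightarrow> int \<Rightarrow> int) \<Rightarrow> ((nat \<times> int) \<times> (nat \<times> int)) set" where
  "dl_rel f = {((n, x), (m, y)). \<exists>k. n \<le> k \<and> m \<le> k \<and>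
      trans_map f n (k - n) x = trans_map f m (k - m) y}"

definition dl_carrier :: "(nat \<Rightarrow> int \<Rightarrow> int) \<Rightarrow> (nat \<times> int) set set" where
  "dl_carrier f = UNIV // dl_rel f"

definition dl_add :: "(nat \<Rightarrow> int \<Rightarrow> int) \<Rightarrow> (nat \<times> int) set \<Rightarrow> (nat \<times> int) set \<Rightarrow> (nat \<times> int) set" where
  "dl_add f A B = {q. \<exists>n x m y k. (n, x) \<in> A \<and> (m, y) \<in> B \<and> n \<le> k \<and> m \<le> k \<and>
      q \<in> dl_rel f `` {(k, trans_map f n (k - n) x + trans_map f m (k - m) y)}}"

definition dl_pos :: "(nat \<Rightarrow> int \<Rightarrow> int) \<Rightarrow> (nat \<Rightarrow> int set) \<Rightarrow> (nat \<times> int) set set" where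
  "dl_pos f P = {A \<in> dl_carrier f. \<exists>n x. (n, x) \<in> A \<and> x \<in> P n}"

definition order_iso_to_dl ::
  "'a::ab_group_add set \<Rightarrow> (nat \<Rightarrow> int set) \<Rightarrow> (nat \<Rightarrow> int \<Rightarrow> int) \<Rightarrow> bool" where
  "order_iso_to_dl Pos P f \<longleftrightarrow> (\<exists>\<phi> :: 'a \<Rightarrow> (nat \<times> int) set.
      bij_betw \<phi> UNIV (dl_carrier f) \<and>
      (\<forall>a b. \<phi> (a + b) = dl_add f (\<phi> a) (\<phi> b)) \<and>
      \<phi> ` Pos = dl_pos f P)"

end

(* Normalise an embedding G -> Q so that its image H contains 1. The denominators q with 1/q in H
   are closed under lcm (Bezout), so the lcms d n of those q <= n form a divisibility chain and
   H is the union of the groups (1 / d n) Z. Stage n is Z with the cone of all x such that x / d n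
   lies in the image of the positive cone; this is the preimage of the positive cone under the
   injective homomorphism x |-> x / d n, hence simple. The connecting maps are multiplication by
   d (n + 1) / d n, and identifying (n, x) with x / d n identifies the direct limit with H. *)
theory Submission
  imports Defs
begin

lemma group_hom_zero: "group_hom g \<Longrightarrow> g 0 = 0"
  unfolding group_hom_def by (metis add.right_neutral add_left_imp_eq)

lemma group_hom_uminus: "group_hom g \<Longrightarrow> g (- x) = - g x"
  unfolding group_hom_def by (metis add_eq_0_iff2 group_hom_def group_hom_zero)

lemma group_hom_diff: "group_hom g \<Longrightarrow> g (x - y) = g x - g y"
  by (metis diff_conv_add_uminus group_hom_def group_hom_uminus)

lemma group_hom_nsmul: "group_hom g \<Longrightarrow> g (nsmul n x) = nsmul n (g x)"
  by (induction n) (simp_all add: nsmul_def group_hom_zero, simp add: group_hom_def)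

lemma po_group_vimage:
  assumes "po_group Pos" and g: "group_hom g" "inj g"
  shows "po_group (g -` Pos)"
proof -
  have cone: "0 \<in> Pos" "\<And>x y. x \<in> Pos \<Longrightarrow> y \<in> Pos \<Longrightarrow> x + y \<in> Pos"
    "Pos \<inter> uminus ` Pos = {0}"
    using assms(1) unfolding po_group_def by auto
  have "g -` Pos \<inter> uminus ` (g -` Pos) \<subseteq> {0}"
  proof
    fix x assume "x \<in> g -` Pos \<inter> uminus ` (g -` Pos)"
    then obtain y where "g x \<in> Pos" "g y \<in> Pos" "x = - y" by auto
    then have "g x \<in> Pos \<inter> uminus ` Pos" using group_hom_uminus[OF g(1)] by auto
    then have "g x = g 0" using cone(3) group_hom_zero[OF g(1)] by auto
    then show "x \<in> {0}" using g(2) by (auto dest: injD)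
  qed
  moreover have "0 \<in> g -` Pos \<inter> uminus ` (g -` Pos)"
    using cone(1) group_hom_zero[OF g(1)] by force
  ultimately show ?thesis
    using cone(1,2) g(1) group_hom_zero[OF g(1)] unfolding po_group_def group_hom_def by auto
qed

lemma order_unit_vimage:
  assumes "order_unit Pos (g x)" and g: "group_hom g"
  shows "order_unit (g -` Pos) x"
  unfolding order_unit_def po_le_def
proof (intro conjI allI)
  show "x \<noteq> 0" "x \<in> g -` Pos"
    using assms group_hom_zero[OF g] unfolding order_unit_def by auto
next
  fix y
  obtain n where "g y - - nsmul n (g x) \<in> Pos" "nsmul n (g x) - g y \<in> Pos"
    using assms(1) unfolding order_unit_def po_le_def by blast
  then have "g (y - - nsmul n x) \<in> Pos" "g (nsmul n x - y) \<in> Pos"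
    by (simp_all only: group_hom_diff[OF g] group_hom_uminus[OF g] group_hom_nsmul[OF g])
  then show "\<exists>n. y - - nsmul n x \<in> g -` Pos \<and> nsmul n x - y \<in> g -` Pos"
    by blast
qed

lemma simple_po_group_vimage:
  fixes g :: "'a::ab_group_add \<Rightarrow> 'b::ab_group_add"
  assumes "simple_po_group Pos" and g: "group_hom g" "inj g" and "(UNIV :: 'a set) \<noteq> {0}"
  shows "simple_po_group (g -` Pos)"
proof -
  have "order_unit (g -` Pos) x" if "x \<in> g -` Pos" "x \<noteq> 0" for x
  proof (rule order_unit_vimage[OF _ g(1)])
    have "g x \<noteq> 0"
      using that g group_hom_zero[OF g(1)] by (metis injD)
    then show "order_unit Pos (g x)"
      using assms(1) that unfolding simple_po_group_def by blast
  qed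
  then show ?thesis
    using assms po_group_vimage unfolding simple_po_group_def by blast
qed

definition add_subgroup :: "'a::ab_group_add set \<Rightarrow> bool" where
  "add_subgroup H \<longleftrightarrow> 0 \<in> H \<and> (\<forall>x\<in>H. \<forall>y\<in>H. x + y \<in> H) \<and> (\<forall>x\<in>H. - x \<in> H)"

lemma add_subgroup_range:
  assumes "group_hom g"
  shows "add_subgroup (range g)"
proof -
  have "g a + g b \<in> range g" "- g a \<in> range g" "0 \<in> range g" for a b
    using assms group_hom_uminus[OF assms] group_hom_zero[OF assms]
    unfolding group_hom_def by (metis rangeI)+
  then show ?thesis
    unfolding add_subgroup_def by blast
qed

lemma add_subgroup_of_int_mult:
  fixes H :: "'a::ring_1 set"
  assumes H: "add_subgroup H" and x: "x \<in> H"
  shows "of_int m * x \<in> H"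
proof -
  have nat_mult: "of_nat n * x \<in> H" for n
    using H x by (induction n) (auto simp: add_subgroup_def distrib_right)
  show ?thesis
  proof (cases m rule: int_cases)
    case (neg n)
    then have "of_int m * x = - (of_nat (Suc n) * x)"
      by (metis minus_mult_left of_int_minus of_int_of_nat_eq)
    moreover have "- (of_nat (Suc n) * x) \<in> H"
      using nat_mult H unfolding add_subgroup_def by blast
    ultimately show ?thesis by simp
  qed (use nat_mult in simp)
qed

lemma add_subgroup_int_combination:
  fixes H :: "'a::ring_1 set"
  assumes "add_subgroup H" "x \<in> H" "y \<in> H"
  shows "of_int a * x + of_int b * y \<in> H"
  using assms add_subgroup_of_int_mult unfolding add_subgroup_def by blast

lemma add_subgroup_inverse_denominator:
  assumes H: "add_subgroup H" "1 \<in> H" "x \<in> H" and x: "quotient_of x = (p, q)"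
  shows "1 / of_int q \<in> H"
proof -
  obtain u w where "u * p + w * q = 1"
    using bezout_int quotient_of_coprime[OF x] by (metis coprime_iff_gcd_eq_1)
  then have "1 / (of_int q :: rat) = of_int u * x + of_int w * 1"
    using quotient_of_denom_pos[OF x] unfolding quotient_of_div[OF x]
    by (simp add: field_simps flip: of_int_mult of_int_add)
  then show ?thesis
    using add_subgroup_int_combination[OF H(1,3,2), of u w] by simp
qed

lemma add_subgroup_inverse_lcm:
  fixes H :: "'a::field_char_0 set"
  assumes H: "add_subgroup H" and "0 < a" "0 < b"
    and "1 / of_int a \<in> H" "1 / of_int b \<in> H"
  shows "1 / of_int (lcm a b) \<in> H"
proof -
  obtain u w where uw: "u * a + w * b = gcd a b"
    using bezout_int by blast
  have "a * b = gcd a b * lcm a b"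
    using prod_gcd_lcm_int[of a b] assms(2,3) by simp
  then have "1 / (of_int (lcm a b) :: 'a) = of_int u * (1 / of_int b) + of_int w * (1 / of_int a)"
    using assms(2,3) uw lcm_pos_int[of a b]
    by (simp add: field_simps flip: of_int_mult of_int_add)
  then show ?thesis
    using add_subgroup_int_combination[OF H assms(5,4), of u w] by simp
qed

fun denominator_chain :: "rat set \<Rightarrow> nat \<Rightarrow> int" where
  "denominator_chain H 0 = 1"
| "denominator_chain H (Suc n) =
    (if 1 / of_nat (Suc n) \<in> H then lcm (denominator_chain H n) (int (Suc n))
     else denominator_chain H n)"

lemma denominator_chain_pos: "0 < denominator_chain H n"
  by (induction n) (auto simp: lcm_pos_int)

lemma denominator_chain_dvd_Suc: "denominator_chain H n dvd denominator_chain H (Suc n)"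
  by simp

lemma inverse_denominator_chain_mem:
  assumes "add_subgroup H" "1 \<in> H"
  shows "1 / of_int (denominator_chain H n) \<in> H"
proof (induction n)
  case (Suc n)
  then show ?case
    using add_subgroup_inverse_lcm[OF assms(1) denominator_chain_pos, of "int (Suc n)"]
    by simp
qed (use assms in simp)

lemma add_subgroup_rat_denominator_chain:
  assumes H: "add_subgroup H" "1 \<in> H"
  shows "H = range (\<lambda>(n, m). of_int m / of_int (denominator_chain H n))"
proof (intro set_eqI iffI)
  fix x assume "x \<in> H"
  obtain p q where x: "quotient_of x = (p, q)"
    by (cases "quotient_of x")
  obtain n where n: "q = int (Suc n)"
    using quotient_of_denom_pos[OF x] by (metis gr0_implies_Suc pos_int_cases)
  have "1 / (of_nat (Suc n) :: rat) \<in> H"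
    using add_subgroup_inverse_denominator[OF H \<open>x \<in> H\<close> x] n by simp
  then have "q dvd denominator_chain H (Suc n)"
    using n by simp
  then obtain c where c: "denominator_chain H (Suc n) = q * c" ..
  have "0 < c"
    using c denominator_chain_pos[of H "Suc n"] n by (simp add: zero_less_mult_iff)
  then have "x = of_int (p * c) / of_int (denominator_chain H (Suc n))"
    unfolding c quotient_of_div[OF x] by simp
  then show "x \<in> range (\<lambda>(n, m). of_int m / of_int (denominator_chain H n))"
    using rangeI[of "\<lambda>(n, m). of_int m / of_int (denominator_chain H n)" "(Suc n, p * c)"]
    by simp
next
  fix x :: rat
  assume "x \<in> range (\<lambda>(n, m). of_int m / of_int (denominator_chain H n))"
  then obtain n m where "x = of_int m / of_int (denominator_chain H n)"
    by auto
  then show "x \<in> H"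
    using add_subgroup_of_int_mult[OF H(1) inverse_denominator_chain_mem[OF H], of m n] by simp
qed

locale divisor_chain =
  fixes d :: "nat \<Rightarrow> int"
  assumes pos: "0 < d n"
    and dvd_Suc: "d n dvd d (Suc n)"
begin

definition stage_val :: "nat \<times> int \<Rightarrow> rat" where
  "stage_val = (\<lambda>(n, x). of_int x / of_int (d n))"

definition scale_map :: "nat \<Rightarrow> int \<Rightarrow> int" where
  "scale_map n x = (d (Suc n) div d n) * x"

definition limit_class :: "rat \<Rightarrow> (nat \<times> int) set" where
  "limit_class r = stage_val -` {r}"

lemma stage_val_simp [simp]: "stage_val (n, x) = of_int x / of_int (d n)"
  by (simp add: stage_val_def)

lemma stage_val_eq_iff [simp]: "stage_val (n, x) = stage_val (n, y) \<longleftrightarrow> x = y"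
  using pos[of n] by simp

lemma stage_val_add: "stage_val (n, x + y) = stage_val (n, x) + stage_val (n, y)"
  by (simp add: add_divide_distrib)

lemma group_hom_scale_map: "group_hom (scale_map n)"
  by (simp add: group_hom_def scale_map_def distrib_left)

lemma stage_val_scale_map: "stage_val (Suc n, scale_map n x) = stage_val (n, x)"
proof -
  obtain k where k: "d (Suc n) = d n * k"
    using dvd_Suc by blast
  then have "0 < k"
    using pos[of n] pos[of "Suc n"] by (simp add: zero_less_mult_iff)
  then show ?thesis
    using k pos[of n] by (simp add: scale_map_def)
qed

lemma stage_val_trans_map:
  assumes "n \<le> k"
  shows "stage_val (k, trans_map scale_map n (k - n) x) = stage_val (n, x)"
proof -
  have "stage_val (n + j, trans_map scale_map n j x) = stage_val (n, x)" for j
  proof (induction j)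
    case (Suc j)
    then show ?case
      using stage_val_scale_map[of "n + j"] by simp
  qed simp
  then show ?thesis
    using assms by (metis le_add_diff_inverse)
qed

lemma dl_rel_eq: "dl_rel scale_map = {(p, q). stage_val p = stage_val q}"
proof (intro set_eqI iffI)
  fix z assume "z \<in> dl_rel scale_map"
  then obtain n x m y k where "z = ((n, x), (m, y))" "n \<le> k" "m \<le> k"
    "trans_map scale_map n (k - n) x = trans_map scale_map m (k - m) y"
    unfolding dl_rel_def by blast
  then show "z \<in> {(p, q). stage_val p = stage_val q}"
    by (metis (mono_tags) case_prodI mem_Collect_eq stage_val_trans_map)
next
  fix z assume "z \<in> {(p, q). stage_val p = stage_val q}"
  then obtain n x m y where z: "z = ((n, x), (m, y))" and "stage_val (n, x) = stage_val (m, y)"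
    by auto
  then have "stage_val (max n m, trans_map scale_map n (max n m - n) x) =
      stage_val (max n m, trans_map scale_map m (max n m - m) y)"
    using stage_val_trans_map[of n "max n m" x] stage_val_trans_map[of m "max n m" y]
    by (simp del: stage_val_simp)
  then have "trans_map scale_map n (max n m - n) x = trans_map scale_map m (max n m - m) y"
    by (simp only: stage_val_eq_iff)
  then show "z \<in> dl_rel scale_map"
    unfolding dl_rel_def z by (auto intro!: exI[of _ "max n m"])
qed

lemma dl_rel_Image: "dl_rel scale_map `` {p} = limit_class (stage_val p)"
  by (auto simp: dl_rel_eq limit_class_def)

lemma dl_carrier_eq: "dl_carrier scale_map = limit_class ` range stage_val"
  unfolding dl_carrier_def quotient_def dl_rel_Image by auto

lemma inj_on_limit_class: "inj_on limit_class (range stage_val)"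
  by (rule inj_onI) (auto simp: limit_class_def)

lemma dl_add_limit_class:
  assumes "r \<in> range stage_val" "s \<in> range stage_val"
  shows "dl_add scale_map (limit_class r) (limit_class s) = limit_class (r + s)"
proof (intro set_eqI iffI)
  fix q assume "q \<in> dl_add scale_map (limit_class r) (limit_class s)"
  then obtain n x m y k where "(n, x) \<in> limit_class r" "(m, y) \<in> limit_class s" "n \<le> k" "m \<le> k"
    and q: "q \<in> limit_class
      (stage_val (k, trans_map scale_map n (k - n) x + trans_map scale_map m (k - m) y))"
    unfolding dl_add_def dl_rel_Image by blast
  then show "q \<in> limit_class (r + s)"
    by (simp add: stage_val_add[of k] stage_val_trans_map limit_class_def del: stage_val_simp)
next
  fix q assume q: "q \<in> limit_class (r + s)"
  obtain n x m y where nx: "stage_val (n, x) = r" and my: "stage_val (m, y) = s"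
    using assms by auto
  let ?k = "max n m"
  have "stage_val (?k, trans_map scale_map n (?k - n) x + trans_map scale_map m (?k - m) y) = r + s"
    using nx my by (simp add: stage_val_add[of ?k] stage_val_trans_map del: stage_val_simp)
  then have "q \<in> dl_rel scale_map ``
      {(?k, trans_map scale_map n (?k - n) x + trans_map scale_map m (?k - m) y)}"
    using q by (simp add: dl_rel_Image)
  moreover have "(n, x) \<in> limit_class r" "(m, y) \<in> limit_class s"
    using nx my by (auto simp: limit_class_def)
  moreover have "n \<le> ?k" "m \<le> ?k"
    by simp_all
  ultimately show "q \<in> dl_add scale_map (limit_class r) (limit_class s)"
    unfolding dl_add_def
    by - (rule CollectI, rule exI[of _ n], rule exI[of _ x], rule exI[of _ m], rule exI[of _ y],
        rule exI[of _ ?k], simp)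
qed

lemma dl_pos_eq:
  "dl_pos scale_map (\<lambda>n. {x. stage_val (n, x) \<in> Q}) = limit_class ` (Q \<inter> range stage_val)"
  unfolding dl_pos_def dl_carrier_eq by (auto simp: limit_class_def simp del: stage_val_simp)

lemma order_embedding_scale_map:
  "order_embedding {x. stage_val (n, x) \<in> Q} {x. stage_val (Suc n, x) \<in> Q} (scale_map n)"
proof -
  have "inj (scale_map n)"
    by (rule injI) (metis stage_val_eq_iff stage_val_scale_map)
  moreover have "scale_map n x \<in> {x. stage_val (Suc n, x) \<in> Q} \<longleftrightarrow> x \<in> {x. stage_val (n, x) \<in> Q}"
    for x
    by (simp only: mem_Collect_eq stage_val_scale_map)
  ultimately show ?thesis
    unfolding order_embedding_def using group_hom_scale_map by blast
qed

end

locale chain_presentation = divisor_chain d for d +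
  fixes v :: "'a::ab_group_add \<Rightarrow> rat"
  assumes v_hom: "group_hom v"
    and v_inj: "inj v"
    and range_v: "range v = range (\<lambda>(n, m). of_int m / of_int (d n))"
begin

definition stage_embedding :: "nat \<Rightarrow> int \<Rightarrow> 'a" where
  "stage_embedding n x = inv v (stage_val (n, x))"

definition stage_cone :: "'a set \<Rightarrow> nat \<Rightarrow> int set" where
  "stage_cone Pos = (\<lambda>n. {x. stage_val (n, x) \<in> v ` Pos})"

lemma range_v_eq: "range v = range stage_val"
  unfolding range_v stage_val_def ..

lemma v_stage_embedding: "v (stage_embedding n x) = stage_val (n, x)"
proof -
  have "stage_val (n, x) \<in> range v"
    unfolding range_v_eq by (rule rangeI)
  then show ?thesis
    unfolding stage_embedding_def by (rule f_inv_into_f)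
qed

lemma group_hom_stage_embedding: "group_hom (stage_embedding n)"
  unfolding group_hom_def
proof (intro allI)
  fix x y
  have "v (stage_embedding n (x + y)) = v (stage_embedding n x + stage_embedding n y)"
    using v_hom unfolding group_hom_def by (simp only: v_stage_embedding stage_val_add)
  then show "stage_embedding n (x + y) = stage_embedding n x + stage_embedding n y"
    by (rule injD[OF v_inj])
qed

lemma inj_stage_embedding: "inj (stage_embedding n)"
  by (rule injI) (metis stage_val_eq_iff v_stage_embedding)

lemma stage_cone_eq_vimage: "stage_cone Pos n = stage_embedding n -` Pos"
proof -
  have "stage_val (n, x) \<in> v ` Pos \<longleftrightarrow> stage_embedding n x \<in> Pos" for x
    unfolding v_stage_embedding[symmetric] by (rule inj_image_mem_iff[OF v_inj])
  then show ?thesis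
    unfolding stage_cone_def vimage_def by (simp del: stage_val_simp)
qed

lemma simple_component_stage_cone:
  assumes "simple_po_group Pos"
  shows "simple_component (stage_cone Pos n)"
  unfolding simple_component_def stage_cone_eq_vimage
proof (rule simple_po_group_vimage[OF assms group_hom_stage_embedding inj_stage_embedding])
  have "(1 :: int) \<notin> {0}"
    by simp
  then show "(UNIV :: int set) \<noteq> {0}"
    by blast
qed

lemma order_embedding_stage_cone:
  "order_embedding (stage_cone Pos n) (stage_cone Pos (Suc n)) (scale_map n)"
  unfolding stage_cone_def by (rule order_embedding_scale_map)

lemma order_iso_to_dl_stage_cone: "order_iso_to_dl Pos (stage_cone Pos) scale_map"
proof -
  have "bij_betw v UNIV (range stage_val)"
    using v_inj range_v_eq by (simp add: bij_betw_def)
  moreover have "bij_betw limit_class (range stage_val) (dl_carrier scale_map)"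
    using inj_on_limit_class dl_carrier_eq by (simp add: bij_betw_def)
  ultimately have "bij_betw (limit_class \<circ> v) UNIV (dl_carrier scale_map)"
    by (rule bij_betw_trans)
  moreover have "(limit_class \<circ> v) (a + b) =
      dl_add scale_map ((limit_class \<circ> v) a) ((limit_class \<circ> v) b)" for a b
  proof -
    have "v a \<in> range stage_val" "v b \<in> range stage_val"
      unfolding range_v_eq[symmetric] by simp_all
    then show ?thesis
      using v_hom unfolding group_hom_def by (simp add: dl_add_limit_class)
  qed
  moreover have "(limit_class \<circ> v) ` Pos = dl_pos scale_map (stage_cone Pos)"
  proof -
    have "v ` Pos \<inter> range stage_val = v ` Pos"
      using range_v_eq by auto
    then show ?thesis
      unfolding stage_cone_def dl_pos_eq by (simp add: image_comp)
  qed
  ultimately show ?thesis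
    unfolding order_iso_to_dl_def by (intro exI[of _ "limit_class \<circ> v"]) simp
qed

end

lemma rank_one_normalized_embedding:
  assumes "rank_one TYPE('a)"
  obtains v :: "'a::ab_group_add \<Rightarrow> rat" where "group_hom v" "inj v" "1 \<in> range v"
proof -
  obtain h :: "'a \<Rightarrow> rat" where h: "inj h" "group_hom h"
    using assms unfolding rank_one_def group_hom_def by blast
  obtain e :: 'a where "e \<noteq> 0"
    using assms unfolding rank_one_def by blast
  then have "h e \<noteq> 0"
    using h group_hom_zero[OF h(2)] by (metis injD)
  define v where "v a = h a / h e" for a
  have "group_hom v"
    using h(2) by (simp add: group_hom_def v_def add_divide_distrib)
  moreover have "inj v"
    using h(1) \<open>h e \<noteq> 0\<close> by (auto simp: inj_def v_def)
  moreover have "1 \<in> range v"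
    using \<open>h e \<noteq> 0\<close> rangeI[of v e] by (simp add: v_def)
  ultimately show thesis
    by (rule that)
qed

theorem proposition1p1:
  fixes Pos :: "'a::ab_group_add set"
  assumes "simple_po_group Pos"
    and "rank_one TYPE('a)"
  shows "\<exists>(P :: nat \<Rightarrow> int set) (f :: nat \<Rightarrow> int \<Rightarrow> int).
           (\<forall>n. simple_component (P n)) \<and>
           (\<forall>n. order_embedding (P n) (P (Suc n)) (f n)) \<and>
           order_iso_to_dl Pos P f"
proof -
  obtain v :: "'a \<Rightarrow> rat" where v: "group_hom v" "inj v" "1 \<in> range v"
    using rank_one_normalized_embedding[OF assms(2)] by blast
  let ?d = "denominator_chain (range v)"
  interpret chain_presentation ?d v
  proof
    show "0 < ?d n" "?d n dvd ?d (Suc n)" for n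
      by (rule denominator_chain_pos, rule denominator_chain_dvd_Suc)
    show "range v = range (\<lambda>(n, m). of_int m / of_int (?d n))"
      by (rule add_subgroup_rat_denominator_chain[OF add_subgroup_range[OF v(1)] v(3)])
  qed (fact v)+
  show ?thesis
    using simple_component_stage_cone[OF assms(1)] order_embedding_stage_cone
      order_iso_to_dl_stage_cone by (intro exI[of _ "stage_cone Pos"] exI[of _ scale_map]) simp
qed

end
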